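(* An $L$-layer RNN with $H$ heads, hidden dimension $m$ and precision $p$ cannot solve the function evaluation task $\mathsf{Eva}$ on $[n]$ whenever $LHmp<n\log n$. The same holds for RNNs with chain-of-thought.
   Context: Function evaluation $\mathsf{Eva}(f,x)$: the input is a function $f:[n]\to[n]$, given as $n$ tokens encoding $f(1),\dots,f(n)$, followed by one token encoding $x\in[n]$. The required output is $f(x)$. RNN layer (one head) with hidden dimension $m$ and precision $p$: given inputs $x_1,x_2,\dots$, one fixes $\mathrm{h}_0\in\mathbb{R}^m$ and computes $\mathrm{h}_i=g_{(i)}(x_i,\mathrm{h}_{i-1})\in\mathbb{R}^m$ and $y_i=f_{(i)}(x_i,\mathrm{h}_i)$ for arbitrary functions $g_{(i)},f_{(i)}$. The hidden states are represented with $p$-bit numbers. An $L$-layer RNN with $H$ heads has $L$ layers, each consisting of $H$ such heads in parallel with concatenated outputs, interleaved with arbitrary position-wise maps. With chain-of-thought, the model, after reading the input, autoregressively generates additional tokens (each appended as a new input position), and the answer is read from the generated tokens. *)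

theory Defs
  imports Complex_Main
begin

text \<open>Hidden states are real lists; validity (length m, entries among
  the p-bit representable numbers) is imposed by rnn_head_wf.
  head_trans i x h computes h_i from x_i and h_(i-1); head_out i x h computes y_i
  from x_i and h_i (positions are 1-based).\<close>
record 'v rnn_head =
  head_init  :: "real list"
  head_trans :: "nat \<Rightarrow> 'v \<Rightarrow> real list \<Rightarrow> real list"
  head_out   :: "nat \<Rightarrow> 'v \<Rightarrow> real list \<Rightarrow> 'v"

text \<open>A model: token embedding (position-wise map), a list of layers, each being a list of
  parallel heads followed by a position-wise map of the concatenated head outputs, and a
  final position-wise read-out to output tokens.\<close>
record 'v rnn_model =
  rnn_embed   :: "nat \<Rightarrow> 'v"
  rnn_layers  :: "('v rnn_head list \<times> ('v list \<Rightarrow> 'v)) list"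
  rnn_readout :: "'v \<Rightarrow> nat"

definition valid_state :: "nat \<Rightarrow> real set \<Rightarrow> real list \<Rightarrow> bool" where
  "valid_state m P h \<longleftrightarrow> length h = m \<and> set h \<subseteq> P"

definition rnn_head_wf :: "nat \<Rightarrow> real set \<Rightarrow> 'v rnn_head \<Rightarrow> bool" where
  "rnn_head_wf m P hh \<longleftrightarrow> valid_state m P (head_init hh) \<and>
     (\<forall>i x h. valid_state m P h \<longrightarrow> valid_state m P (head_trans hh i x h))"

definition rnn_wf :: "nat \<Rightarrow> nat \<Rightarrow> nat \<Rightarrow> real set \<Rightarrow> 'v rnn_model \<Rightarrow> bool" where
  "rnn_wf L H m P M \<longleftrightarrow> length (rnn_layers M) = L \<and>
     (\<forall>ly \<in> set (rnn_layers M). length (fst ly) = H \<and> (\<forall>hh \<in> set (fst ly). rnn_head_wf m P hh))"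

fun head_state :: "'v rnn_head \<Rightarrow> 'v list \<Rightarrow> nat \<Rightarrow> real list" where
  "head_state hh xs 0 = head_init hh"
| "head_state hh xs (Suc i) = head_trans hh (Suc i) (xs ! i) (head_state hh xs i)"

definition head_run :: "'v rnn_head \<Rightarrow> 'v list \<Rightarrow> 'v list" where
  "head_run hh xs = map (\<lambda>i. head_out hh i (xs ! (i - 1)) (head_state hh xs i)) [1..<length xs + 1]"

definition layer_run :: "'v rnn_head list \<times> ('v list \<Rightarrow> 'v) \<Rightarrow> 'v list \<Rightarrow> 'v list" where
  "layer_run ly xs = map (\<lambda>i. snd ly (map (\<lambda>hh. head_run hh xs ! i) (fst ly))) [0..<length xs]"

definition rnn_run :: "'v rnn_model \<Rightarrow> nat list \<Rightarrow> nat list" where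
  "rnn_run M toks = map (rnn_readout M)
     (fold layer_run (rnn_layers M) (map (rnn_embed M) toks))"

fun cot_extend :: "'v rnn_model \<Rightarrow> nat list \<Rightarrow> nat \<Rightarrow> nat list" where
  "cot_extend M toks 0 = toks"
| "cot_extend M toks (Suc k) = (let s = cot_extend M toks k in s @ [last (rnn_run M s)])"

definition cot_answer :: "'v rnn_model \<Rightarrow> nat \<Rightarrow> nat list \<Rightarrow> nat" where
  "cot_answer M T toks = last (rnn_run M (cot_extend M toks T))"

definition eva_input :: "nat \<Rightarrow> (nat \<Rightarrow> nat) \<Rightarrow> nat \<Rightarrow> nat list" where
  "eva_input n f x = map f [1..<n+1] @ [x]"

definition solves_eva :: "'v rnn_model \<Rightarrow> nat \<Rightarrow> nat \<Rightarrow> bool" where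
  "solves_eva M T n \<longleftrightarrow> (\<forall>f x. (\<forall>i\<in>{1..n}. f i \<in> {1..n}) \<longrightarrow> x \<in> {1..n} \<longrightarrow>
      cot_answer M T (eva_input n f x) = f x)"

end

theory Submission
  imports Defs
begin

text \<open>A (chain-of-thought) RNN that has read an Eva input up to and including f(n) must
  store everything it will ever need about f in its hidden states at position n: all
  later outputs depend only on these states and on the suffix of the input. The states
  take at most (2^p)^(LHm) = 2^(LHmp) values, while there are n^n functions
  f : [n] \<rightarrow> [n]. If LHmp < n log n, two different functions f, g lead to the same
  states, so on a query x with f x \<noteq> g x the model answers both inputs identically.\<close>

type_synonym 'v rnn_layer = "'v rnn_head list \<times> ('v list \<Rightarrow> 'v)"

lemma head_state_append:
  "i \<le> length us \<Longrightarrow> head_state hh (us @ vs) i = head_state hh us i"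
  by (induction i) (simp_all add: nth_append)

lemma head_state_append_cong:
  assumes "length us1 = length us2"
    and "head_state hh us1 (length us1) = head_state hh us2 (length us2)"
  shows "head_state hh (us1 @ vs) (length us1 + j) = head_state hh (us2 @ vs) (length us2 + j)"
proof (induction j)
  case 0
  show ?case
    using assms by (simp add: head_state_append)
next
  case (Suc j)
  then show ?case
    using assms(1) by (simp add: nth_append)
qed

lemma head_run_nth:
  "i < length xs \<Longrightarrow>
    head_run hh xs ! i = head_out hh (Suc i) (xs ! i) (head_state hh xs (Suc i))"
  by (simp add: head_run_def del: upt_Suc)

lemma length_layer_run [simp]: "length (layer_run ly xs) = length xs"
  by (simp add: layer_run_def)

lemma layer_run_nth:
  "i < length xs \<Longrightarrow>
    layer_run ly xs ! i = snd ly (map (\<lambda>hh. head_run hh xs ! i) (fst ly))"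
  by (simp add: layer_run_def)

lemma length_fold_layer_run [simp]: "length (fold layer_run ls xs) = length xs"
  by (induction ls arbitrary: xs) auto

lemma take_layer_run_append:
  "take (length us) (layer_run ly (us @ vs)) = layer_run ly us"
proof (rule nth_equalityI)
  fix i assume "i < length (take (length us) (layer_run ly (us @ vs)))"
  then have "i < length us" by simp
  then show "take (length us) (layer_run ly (us @ vs)) ! i = layer_run ly us ! i"
    by (simp add: layer_run_nth head_run_nth nth_append head_state_append
        del: head_state.simps)
qed simp

lemma drop_layer_run_append_cong:
  assumes "length us1 = length us2"
    and "\<forall>hh \<in> set (fst ly).
      head_state hh us1 (length us1) = head_state hh us2 (length us2)"
  shows "drop (length us1) (layer_run ly (us1 @ vs)) =
    drop (length us2) (layer_run ly (us2 @ vs))"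
proof (rule nth_equalityI)
  fix j assume "j < length (drop (length us1) (layer_run ly (us1 @ vs)))"
  then have j: "j < length vs" by simp
  have "head_state hh (us1 @ vs) (Suc (length us1 + j)) =
      head_state hh (us2 @ vs) (Suc (length us2 + j))" if "hh \<in> set (fst ly)" for hh
    using head_state_append_cong[OF assms(1), of hh vs "Suc j"] assms that by simp
  then show "drop (length us1) (layer_run ly (us1 @ vs)) ! j =
      drop (length us2) (layer_run ly (us2 @ vs)) ! j"
    using j assms(1)
    by (simp add: layer_run_nth head_run_nth nth_append cong: map_cong del: head_state.simps)
qed (simp add: assms(1))

fun hidden_states :: "'v rnn_layer list \<Rightarrow> 'v list \<Rightarrow> real list list list" where
  "hidden_states [] us = []"
| "hidden_states (ly # ls) us =
     map (\<lambda>hh. head_state hh us (length us)) (fst ly) # hidden_states ls (layer_run ly us)"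

lemma drop_fold_layer_run_append_cong:
  assumes "length us1 = length us2" and "hidden_states ls us1 = hidden_states ls us2"
  shows "drop (length us1) (fold layer_run ls (us1 @ vs)) =
    drop (length us2) (fold layer_run ls (us2 @ vs))"
  using assms
proof (induction ls arbitrary: us1 us2 vs)
  case Nil
  then show ?case by simp
next
  case (Cons ly ls)
  define ws where "ws = drop (length us1) (layer_run ly (us1 @ vs))"
  have "\<forall>hh \<in> set (fst ly).
      head_state hh us1 (length us1) = head_state hh us2 (length us2)"
    using Cons.prems(2) by simp
  then have "ws = drop (length us2) (layer_run ly (us2 @ vs))"
    unfolding ws_def by (rule drop_layer_run_append_cong[OF Cons.prems(1)])
  then have "layer_run ly (us1 @ vs) = layer_run ly us1 @ ws"
    and "layer_run ly (us2 @ vs) = layer_run ly us2 @ ws"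
    using append_take_drop_id take_layer_run_append ws_def by metis+
  moreover have "hidden_states ls (layer_run ly us1) = hidden_states ls (layer_run ly us2)"
    using Cons.prems(2) by simp
  ultimately show ?case
    using Cons.IH[of "layer_run ly us1" "layer_run ly us2" ws] Cons.prems(1) by simp
qed

definition rnn_memory :: "'v rnn_model \<Rightarrow> nat list \<Rightarrow> real list list list" where
  "rnn_memory M toks = hidden_states (rnn_layers M) (map (rnn_embed M) toks)"

lemma last_rnn_run_append_cong:
  assumes "length toks1 = length toks2" and "rnn_memory M toks1 = rnn_memory M toks2"
    and "zs \<noteq> []"
  shows "last (rnn_run M (toks1 @ zs)) = last (rnn_run M (toks2 @ zs))"
proof -
  have "drop (length toks1) (rnn_run M (toks1 @ zs)) =
      drop (length toks2) (rnn_run M (toks2 @ zs))"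
    using drop_fold_layer_run_append_cong[of "map (rnn_embed M) toks1" "map (rnn_embed M) toks2"
        "rnn_layers M" "map (rnn_embed M) zs"] assms(1,2)
    by (simp add: rnn_run_def rnn_memory_def drop_map)
  moreover have "length toks1 < length (rnn_run M (toks1 @ zs))"
    and "length toks2 < length (rnn_run M (toks2 @ zs))"
    using assms(3) by (simp_all add: rnn_run_def)
  ultimately show ?thesis by (metis last_drop)
qed

lemma cot_extend_append_cong:
  assumes "length toks1 = length toks2" and "rnn_memory M toks1 = rnn_memory M toks2"
    and "ys \<noteq> []"
  shows "\<exists>zs. zs \<noteq> [] \<and>
    cot_extend M (toks1 @ ys) T = toks1 @ zs \<and> cot_extend M (toks2 @ ys) T = toks2 @ zs"
proof (induction T)
  case 0
  then show ?case using assms(3) by auto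
next
  case (Suc T)
  then obtain zs where "zs \<noteq> []" and zs: "cot_extend M (toks1 @ ys) T = toks1 @ zs"
    "cot_extend M (toks2 @ ys) T = toks2 @ zs" by blast
  have "last (rnn_run M (toks1 @ zs)) = last (rnn_run M (toks2 @ zs))"
    using assms(1,2) \<open>zs \<noteq> []\<close> by (rule last_rnn_run_append_cong)
  then show ?case using zs by (auto simp: Let_def)
qed

lemma cot_answer_append_cong:
  assumes "length toks1 = length toks2" and "rnn_memory M toks1 = rnn_memory M toks2"
    and "ys \<noteq> []"
  shows "cot_answer M T (toks1 @ ys) = cot_answer M T (toks2 @ ys)"
proof -
  obtain zs where "zs \<noteq> []" and "cot_extend M (toks1 @ ys) T = toks1 @ zs"
    "cot_extend M (toks2 @ ys) T = toks2 @ zs"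
    using cot_extend_append_cong[OF assms] by blast
  then show ?thesis
    using last_rnn_run_append_cong[OF assms(1,2)] by (simp add: cot_answer_def)
qed

lemma head_state_valid: "rnn_head_wf m P hh \<Longrightarrow> valid_state m P (head_state hh xs i)"
  by (induction i) (auto simp: rnn_head_wf_def)

definition memory_space :: "nat \<Rightarrow> nat \<Rightarrow> nat \<Rightarrow> real set \<Rightarrow> real list list list set"
  where "memory_space L H m P = {ss. length ss = L \<and>
    (\<forall>hs \<in> set ss. length hs = H \<and> (\<forall>h \<in> set hs. valid_state m P h))}"

lemma hidden_states_in_memory_space:
  assumes "\<forall>ly \<in> set ls.
    length (fst ly) = H \<and> (\<forall>hh \<in> set (fst ly). rnn_head_wf m P hh)"
  shows "hidden_states ls us \<in> memory_space (length ls) H m P"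
  using assms
  by (induction ls arbitrary: us) (auto simp: memory_space_def head_state_valid)

lemma rnn_memory_in_memory_space:
  "rnn_wf L H m P M \<Longrightarrow> rnn_memory M toks \<in> memory_space L H m P"
  unfolding rnn_wf_def rnn_memory_def by (metis hidden_states_in_memory_space)

lemma
  assumes "finite P"
  shows finite_memory_space: "finite (memory_space L H m P)"
    and card_memory_space: "card (memory_space L H m P) = card P ^ (L * H * m)"
proof -
  let ?V = "{h. set h \<subseteq> P \<and> length h = m}"
  let ?W = "{hs. set hs \<subseteq> ?V \<and> length hs = H}"
  have space: "memory_space L H m P = {ss. set ss \<subseteq> ?W \<and> length ss = L}"
    by (auto simp: memory_space_def valid_state_def subset_iff)
  have "finite ?V" and "finite ?W"
    using assms by (simp_all add: finite_lists_length_eq)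
  then show "finite (memory_space L H m P)"
    unfolding space by (simp add: finite_lists_length_eq)
  have "card (memory_space L H m P) = ((card P ^ m) ^ H) ^ L"
    unfolding space using assms \<open>finite ?V\<close> \<open>finite ?W\<close>
    by (simp add: card_lists_length_eq)
  then show "card (memory_space L H m P) = card P ^ (L * H * m)"
    by (simp add: power_mult[symmetric] mult.commute mult.left_commute)
qed

lemma two_power_less_self_power:
  fixes N n :: nat
  assumes "real N < real n * log 2 (real n)"
  shows "2 ^ N < n ^ n"
proof -
  have "n > 0"
    using assms by (cases n) simp_all
  have "real (2 ^ N) = 2 powr real N"
    by (simp add: powr_realpow)
  also have "\<dots> < 2 powr (real n * log 2 (real n))"
    using assms by simp
  also have "\<dots> = (2 powr log 2 (real n)) powr real n"
    by (simp add: powr_powr mult.commute)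
  also have "\<dots> = real (n ^ n)"
    using \<open>n > 0\<close> by (simp add: powr_realpow)
  finally show ?thesis
    by linarith
qed

lemma rnn_memory_collision:
  assumes "finite P" and "card P \<le> 2 ^ p" and "rnn_wf L H m P M"
    and "real (L * H * m * p) < real n * log 2 (real n)"
  obtains ws1 ws2
  where "set ws1 \<subseteq> {1..n}" "length ws1 = n" "set ws2 \<subseteq> {1..n}" "length ws2 = n"
    and "ws1 \<noteq> ws2" and "rnn_memory M ws1 = rnn_memory M ws2"
proof -
  let ?D = "{ws. set ws \<subseteq> {1..n} \<and> length ws = n}"
  have "card (rnn_memory M ` ?D) \<le> card (memory_space L H m P)"
    using rnn_memory_in_memory_space[OF assms(3)] finite_memory_space[OF assms(1)]
    by (intro card_mono) auto
  also have "\<dots> \<le> (2 ^ p) ^ (L * H * m)"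
    unfolding card_memory_space[OF assms(1)] using assms(2) by (rule power_mono) simp
  also have "\<dots> = 2 ^ (L * H * m * p)"
    by (simp add: power_mult[symmetric] mult.commute)
  also have "\<dots> < n ^ n"
    using assms(4) by (rule two_power_less_self_power)
  also have "\<dots> = card ?D"
    by (simp add: card_lists_length_eq)
  finally have "\<not> inj_on (rnn_memory M) ?D"
    by (rule pigeonhole)
  then show ?thesis
    using that unfolding inj_on_def by blast
qed

lemma solves_eva_word:
  assumes "solves_eva M T n" and "set ws \<subseteq> {1..n}" and "length ws = n" and "j < n"
  shows "cot_answer M T (ws @ [Suc j]) = ws ! j"
proof -
  define f where "f i = ws ! (i - 1)" for i
  have "map f [1..<n+1] = ws"
    using assms(3) by (intro nth_equalityI) (simp_all add: f_def del: upt_Suc)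
  then have "eva_input n f (Suc j) = ws @ [Suc j]"
    by (simp add: eva_input_def)
  moreover have "\<forall>i \<in> {1..n}. f i \<in> {1..n}"
  proof
    fix i assume "i \<in> {1..n}"
    then have "ws ! (i - 1) \<in> set ws"
      using assms(3) by (intro nth_mem) auto
    then show "f i \<in> {1..n}"
      using assms(2) by (auto simp: f_def)
  qed
  moreover have "Suc j \<in> {1..n}"
    using assms(4) by simp
  ultimately have "cot_answer M T (ws @ [Suc j]) = f (Suc j)"
    using assms(1) unfolding solves_eva_def by metis
  then show ?thesis
    by (simp add: f_def)
qed

theorem theoremA4:
  fixes L H m p n T :: nat and P :: "real set" and M :: "'v rnn_model"
  assumes "finite P" and "card P \<le> 2 ^ p"
    and "rnn_wf L H m P M"
    and "real (L * H * m * p) < real n * log 2 (real n)"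
  shows "\<not> solves_eva M T n"
proof
  assume solves: "solves_eva M T n"
  obtain ws1 ws2 where ws1: "set ws1 \<subseteq> {1..n}" "length ws1 = n"
    and ws2: "set ws2 \<subseteq> {1..n}" "length ws2 = n"
    and "ws1 \<noteq> ws2" and same_memory: "rnn_memory M ws1 = rnn_memory M ws2"
    using rnn_memory_collision[OF assms] .
  then obtain j where "j < n" and "ws1 ! j \<noteq> ws2 ! j"
    using nth_equalityI by metis
  have "cot_answer M T (ws1 @ [Suc j]) = cot_answer M T (ws2 @ [Suc j])"
    using ws1(2) ws2(2) same_memory by (intro cot_answer_append_cong) simp_all
  then show False
    using solves_eva_word[OF solves ws1 \<open>j < n\<close>] solves_eva_word[OF solves ws2 \<open>j < n\<close>]
      \<open>ws1 ! j \<noteq> ws2 ! j\<close> by simp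
qed

end
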